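(* For every positive integer $n$ and odd $k\ge3$, $$\delta_kc_n^{\mathfrak a}=-\frac{T^k}{k}\big[n^k-(n-1)^k-1\big]c_n^{\mathfrak a}.$$
   Context: $\mathcal M^{(1)}=\mathbb Q[\zeta^{\mathfrak a}(3),\zeta^{\mathfrak a}(5),\dots]$ is the free polynomial subalgebra of depth-one motivic MZVs in $\mathcal A=\mathcal H/\zeta^{\mathfrak m}(2)\mathcal H$; $\zeta^{\mathfrak a}(k)=0$ for even $k$. For odd $k\ge3$, $\delta_k$ is the continuous $\mathbb Q((T))$-linear derivation $\partial/\partial\zeta^{\mathfrak a}(k)$ of $\mathcal M^{(1)}((T))$. $H^{\mathfrak a}(n)=(-1)^n\sum_{j\ge1}\binom{n+j-1}{n-1}\zeta^{\mathfrak a}(n+j)T^j$; $H^{\mathfrak a}(1^0)=1$, $H^{\mathfrak a}(1^n)=\frac1n\sum_{i=1}^n(-1)^{i-1}H^{\mathfrak a}(i)H^{\mathfrak a}(1^{n-i})$; $c_n^{\mathfrak a}=n\sum_{j\ge0}(n-1)^jT^jH^{\mathfrak a}(1^j)$. *)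

theory Defs
  imports "HOL-Library.Poly_Mapping" "HOL-Computational_Algebra.Formal_Power_Series"
begin

text \<open>The variable x_k (k odd, k >= 3) plays the role of zeta^a(k); the
  subalgebra generated by these is M^(1) (free polynomial algebra).\<close>
type_synonym mpoly = "(nat \<Rightarrow>\<^sub>0 nat) \<Rightarrow>\<^sub>0 rat"

definition mconst :: "rat \<Rightarrow> mpoly" where
  "mconst c = Poly_Mapping.single 0 c"

definition mvar :: "nat \<Rightarrow> mpoly" where
  "mvar k = Poly_Mapping.single (Poly_Mapping.single k 1) 1"

definition zeta_a :: "nat \<Rightarrow> mpoly" where
  "zeta_a k = (if odd k \<and> 3 \<le> k then mvar k else 0)"

definition pderiv_var :: "nat \<Rightarrow> mpoly \<Rightarrow> mpoly" where
  "pderiv_var k p =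
     (\<Sum>m\<in>Poly_Mapping.keys p. Poly_Mapping.single (m - Poly_Mapping.single k (1::nat))
                     (of_nat (Poly_Mapping.lookup (m :: nat \<Rightarrow>\<^sub>0 nat) k) * (Poly_Mapping.lookup p m :: rat)))"

text \<open>delta_k: the T-linear continuous derivation d/d zeta^a(k), acting coefficientwise.\<close>
definition delta :: "nat \<Rightarrow> mpoly fps \<Rightarrow> mpoly fps" where
  "delta k f = Abs_fps (\<lambda>j. pderiv_var k (fps_nth f j))"

definition Ha :: "nat \<Rightarrow> mpoly fps" where
  "Ha n = fps_const ((-1) ^ n) *
     Abs_fps (\<lambda>j. if j = 0 then 0 else of_nat ((n + j - 1) choose (n - 1)) * zeta_a (n + j))"

function Ha_ones :: "nat \<Rightarrow> mpoly fps" where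
  "Ha_ones n = (if n = 0 then 1 else
     fps_const (mconst (1 / of_nat n)) *
       (\<Sum>i\<in>{1..n}. fps_const ((-1) ^ (i - 1)) * Ha i * Ha_ones (n - i)))"
  by auto
termination by (relation "measure id") auto

definition c_a :: "nat \<Rightarrow> mpoly fps" where
  "c_a n = of_nat n * suminf (\<lambda>j::nat. of_nat ((n - 1) ^ j) * fps_X ^ j * Ha_ones j)"

end

theory Submission
  imports Defs
begin

(* delta_k is a derivation that kills T and the rational constants and commutes with
   T-adically convergent sums. On the generators, delta_k H(i) = (-1)^i binom(k-1, i-1) T^(k-i)
   for i < k and delta_k H(i) = 0 for i >= k. Differentiating Newton's identity
   m H(1^m) = sum_i (-1)^(i-1) H(i) H(1^(m-i)) and inducting on m yields
   delta_k H(1^m) = -(1/k) sum_{0<j<k} binom(k, j) T^(k-j) H(1^(m-j)).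
   So delta_k maps the j-th term of the series c_n to a convolution of the earlier terms with a
   finitely supported sequence, whence delta_k c_n = -(1/k) T^k (sum_{0<j<k} binom(k, j) (n-1)^j) c_n,
   and the binomial theorem evaluates the coefficient to -(n^k - (n-1)^k - 1)/k. *)

unbundle fps_syntax

lemma poly_mapping_eq_sum_single:
  "p = (\<Sum>a\<in>Poly_Mapping.keys p. Poly_Mapping.single a (Poly_Mapping.lookup p a))"
proof (rule poly_mapping_eqI)
  fix x
  have "Poly_Mapping.lookup (\<Sum>a\<in>Poly_Mapping.keys p. Poly_Mapping.single a (Poly_Mapping.lookup p a)) x
      = (\<Sum>a\<in>Poly_Mapping.keys p. if a = x then Poly_Mapping.lookup p a else 0)"
    by (simp add: lookup_sum lookup_single when_def)
  also have "\<dots> = Poly_Mapping.lookup p x"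
    by (subst sum.delta) (auto simp: in_keys_iff)
  finally show "Poly_Mapping.lookup p x =
      Poly_Mapping.lookup (\<Sum>a\<in>Poly_Mapping.keys p. Poly_Mapping.single a (Poly_Mapping.lookup p a)) x"
    by simp
qed

lemma pderiv_var_single:
  "pderiv_var k (Poly_Mapping.single a c) =
     Poly_Mapping.single (a - Poly_Mapping.single k 1) (of_nat (Poly_Mapping.lookup a k) * c)"
  unfolding pderiv_var_def by simp

lemma pderiv_var_add: "pderiv_var k (p + q) = pderiv_var k p + pderiv_var k q"
  unfolding pderiv_var_def
  by (rule setsum_keys_plus_distrib) (simp_all only: distrib_left single_add single_zero mult_zero_right)

lemma pderiv_var_zero [simp]: "pderiv_var k 0 = 0"
  by (simp add: pderiv_var_def)

lemma pderiv_var_sum: "pderiv_var k (sum f A) = (\<Sum>a\<in>A. pderiv_var k (f a))"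
  by (induction A rule: infinite_finite_induct) (auto simp: pderiv_var_add)

lemma diff_single_add_distrib:
  assumes "Poly_Mapping.lookup a k > 0"
  shows "a - Poly_Mapping.single k (1::nat) + b = a + b - Poly_Mapping.single k 1"
  by (rule poly_mapping_eqI) (use assms in \<open>auto simp: lookup_add lookup_minus lookup_single when_def\<close>)

lemma pderiv_var_single_mult:
  "pderiv_var k (Poly_Mapping.single a c * Poly_Mapping.single b d :: mpoly) =
     pderiv_var k (Poly_Mapping.single a c) * Poly_Mapping.single b d +
     Poly_Mapping.single a c * pderiv_var k (Poly_Mapping.single b d)"
proof -
  let ?m = "a + b - Poly_Mapping.single k 1"
  have left: "pderiv_var k (Poly_Mapping.single a c) * Poly_Mapping.single b d =
      Poly_Mapping.single ?m (of_nat (Poly_Mapping.lookup a k) * c * d)"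
    by (cases "Poly_Mapping.lookup a k > 0")
       (simp_all only: pderiv_var_single mult_single diff_single_add_distrib, simp_all)
  have right: "Poly_Mapping.single a c * pderiv_var k (Poly_Mapping.single b d) =
      Poly_Mapping.single ?m (of_nat (Poly_Mapping.lookup b k) * c * d)"
    by (cases "Poly_Mapping.lookup b k > 0")
       (simp_all only: pderiv_var_single mult_single add.commute[of a]
          diff_single_add_distrib[of b k a], simp_all add: mult_ac)
  show ?thesis
    unfolding left right single_add[symmetric]
    by (simp only: mult_single pderiv_var_single lookup_add of_nat_add) (simp add: algebra_simps)
qed

lemma pderiv_var_mult: "pderiv_var k (p * q :: mpoly) = pderiv_var k p * q + p * pderiv_var k q"
proof -
  let ?m = "\<lambda>r a. Poly_Mapping.single a (Poly_Mapping.lookup r a) :: mpoly"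
  let ?P = "Poly_Mapping.keys p" and ?Q = "Poly_Mapping.keys q"
  have p: "p = (\<Sum>a\<in>?P. ?m p a)" and q: "q = (\<Sum>b\<in>?Q. ?m q b)"
    by (rule poly_mapping_eq_sum_single)+
  have "pderiv_var k (p * q) = pderiv_var k ((\<Sum>a\<in>?P. ?m p a) * (\<Sum>b\<in>?Q. ?m q b))"
    using p q by simp
  also have "\<dots> = (\<Sum>a\<in>?P. pderiv_var k (?m p a)) * (\<Sum>b\<in>?Q. ?m q b)
      + (\<Sum>a\<in>?P. ?m p a) * (\<Sum>b\<in>?Q. pderiv_var k (?m q b))"
    by (simp add: sum_product pderiv_var_sum pderiv_var_single_mult sum.distrib)
  also have "\<dots> = pderiv_var k p * q + p * pderiv_var k q"
    by (simp flip: p q pderiv_var_sum)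
  finally show ?thesis .
qed

lemma mconst_0: "mconst 0 = 0"
  by (simp add: mconst_def)

lemma mconst_1: "mconst 1 = 1"
  by (simp add: mconst_def)

lemma mconst_add: "mconst (a + b) = mconst a + mconst b"
  by (simp add: mconst_def single_add)

lemma mconst_diff: "mconst (a - b) = mconst a - mconst b"
  by (simp add: mconst_def single_diff)

lemma mconst_uminus: "mconst (- a) = - mconst a"
  by (simp add: mconst_def single_uminus)

lemma mconst_mult: "mconst (a * b) = mconst a * mconst b"
  by (simp add: mconst_def mult_single)

lemma mconst_of_nat: "mconst (of_nat n) = of_nat n"
  by (simp add: mconst_def)

lemma mconst_neg_one_power: "mconst ((-1) ^ i) = (-1) ^ i"
  by (induction i) (simp_all add: mconst_1 mconst_mult mconst_uminus)

lemma pderiv_var_mconst [simp]: "pderiv_var k (mconst c) = 0"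
  by (simp add: mconst_def pderiv_var_single)

lemma pderiv_var_one [simp]: "pderiv_var k 1 = 0"
  using pderiv_var_mconst[of k 1] by (simp only: mconst_1)

lemma pderiv_var_mconst_mult: "pderiv_var k (mconst c * p) = mconst c * pderiv_var k p"
  by (simp add: pderiv_var_mult)

lemma pderiv_var_zeta_a:
  assumes "odd k" "3 \<le> k"
  shows "pderiv_var k (zeta_a m) = (if m = k then 1 else 0)"
  using assms by (auto simp: zeta_a_def mvar_def pderiv_var_single lookup_single)

abbreviation fps_of_rat :: "rat \<Rightarrow> mpoly fps" where
  "fps_of_rat r \<equiv> fps_const (mconst r)"

lemma fps_of_rat_0: "fps_of_rat 0 = 0"
  by (simp add: mconst_0)

lemma fps_of_rat_1: "fps_of_rat 1 = 1"
  by (simp add: mconst_1)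

lemma fps_of_rat_add: "fps_of_rat (a + b) = fps_of_rat a + fps_of_rat b"
  by (simp add: mconst_add)

lemma fps_of_rat_diff: "fps_of_rat (a - b) = fps_of_rat a - fps_of_rat b"
  by (simp add: mconst_diff)

lemma fps_of_rat_mult: "fps_of_rat (a * b) = fps_of_rat a * fps_of_rat b"
  by (simp add: mconst_mult)

lemma fps_of_rat_sum: "fps_of_rat (\<Sum>i\<in>A. g i) = (\<Sum>i\<in>A. fps_of_rat (g i))"
  by (induction A rule: infinite_finite_induct) (simp_all add: fps_of_rat_0 fps_of_rat_add)

lemma fps_of_rat_of_nat: "fps_of_rat (of_nat n) = of_nat n"
  by (simp add: mconst_of_nat fps_of_nat)

lemma delta_nth [simp]: "delta k f $ j = pderiv_var k (f $ j)"
  by (simp add: delta_def)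

lemma delta_add: "delta k (f + g) = delta k f + delta k g"
  by (simp add: fps_eq_iff pderiv_var_add)

lemma delta_sum: "delta k (sum f A) = (\<Sum>a\<in>A. delta k (f a))"
  by (induction A rule: infinite_finite_induct) (auto simp: delta_add fps_eq_iff)

lemma delta_mult: "delta k (f * g) = delta k f * g + f * delta k g"
  by (simp add: fps_eq_iff fps_mult_nth pderiv_var_sum pderiv_var_mult sum.distrib)

lemma delta_fps_of_rat [simp]: "delta k (fps_of_rat c) = 0"
  by (simp add: fps_eq_iff)

lemma delta_of_nat [simp]: "delta k (of_nat n) = 0"
  by (metis delta_fps_of_rat fps_of_rat_of_nat)

lemma delta_one [simp]: "delta k 1 = 0"
  using delta_of_nat[of k 1] by simp

lemma delta_X_power [simp]: "delta k (fps_X ^ m) = 0"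
  by (simp add: fps_eq_iff fps_X_power_nth)

lemma tendsto_delta:
  assumes "(F \<longlongrightarrow> G) net"
  shows "((\<lambda>x. delta k (F x)) \<longlongrightarrow> delta k G) net"
proof (rule tendsto_fpsI)
  fix n
  from assms have "eventually (\<lambda>x. F x $ n = G $ n) net"
    by (simp add: tendsto_fps_iff)
  then show "eventually (\<lambda>x. delta k (F x) $ n = delta k G $ n) net"
    by (rule eventually_mono) simp
qed

lemma tendsto_fps_mult_left:
  fixes F :: "'b \<Rightarrow> 'a::ring fps"
  assumes "(F \<longlongrightarrow> G) net"
  shows "((\<lambda>x. H * F x) \<longlongrightarrow> H * G) net"
proof (rule tendsto_fpsI)
  fix n
  have "eventually (\<lambda>x. \<forall>i\<in>{..n}. F x $ i = G $ i) net"
    using assms by (intro eventually_ball_finite) (auto simp: tendsto_fps_iff)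
  then show "eventually (\<lambda>x. (H * F x) $ n = (H * G) $ n) net"
    by (rule eventually_mono) (auto simp: fps_mult_nth intro!: sum.cong)
qed

lemma tendsto_fps_sum:
  fixes F :: "'i \<Rightarrow> 'b \<Rightarrow> 'a::ab_group_add fps"
  assumes "\<And>i. i \<in> I \<Longrightarrow> (F i \<longlongrightarrow> G i) net"
  shows "((\<lambda>x. \<Sum>i\<in>I. F i x) \<longlongrightarrow> (\<Sum>i\<in>I. G i)) net"
proof (cases "finite I")
  case True
  show ?thesis
  proof (rule tendsto_fpsI)
    fix n
    have "eventually (\<lambda>x. \<forall>i\<in>I. F i x $ n = G i $ n) net"
      using True assms by (intro eventually_ball_finite) (auto simp: tendsto_fps_iff)
    then show "eventually (\<lambda>x. (\<Sum>i\<in>I. F i x) $ n = (\<Sum>i\<in>I. G i) $ n) net"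
      by (rule eventually_mono) (simp add: fps_sum_nth)
  qed
qed simp

lemma sums_fps_of_nth_vanishing:
  fixes f :: "nat \<Rightarrow> 'a::ab_group_add fps"
  assumes "\<And>j i. i < j \<Longrightarrow> f j $ i = 0"
  shows "f sums Abs_fps (\<lambda>t. \<Sum>j\<le>t. f j $ t)"
  unfolding sums_def
proof (rule tendsto_fpsI)
  fix t
  show "eventually (\<lambda>M. (\<Sum>j<M. f j) $ t = Abs_fps (\<lambda>t. \<Sum>j\<le>t. f j $ t) $ t) sequentially"
  proof (rule eventually_sequentiallyI)
    fix M assume "Suc t \<le> M"
    then show "(\<Sum>j<M. f j) $ t = Abs_fps (\<lambda>t. \<Sum>j\<le>t. f j $ t) $ t"
      unfolding fps_sum_nth fps_nth_Abs_fps
      by (intro sum.mono_neutral_right) (use assms in \<open>auto simp: not_le\<close>)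
  qed
qed

lemma sum_convolution_finite_support:
  fixes a f :: "nat \<Rightarrow> 'a::comm_semiring_0"
  assumes "\<And>i. K \<le> i \<Longrightarrow> a i = 0"
  shows "(\<Sum>j<M. \<Sum>i\<le>j. a i * f (j - i)) = (\<Sum>i<K. a i * (\<Sum>j<M - i. f j))"
proof -
  have "(\<Sum>j<M. \<Sum>i\<le>j. a i * f (j - i)) = (\<Sum>j<M. \<Sum>i\<in>{i\<in>{..<M}. i \<le> j}. a i * f (j - i))"
    by (intro sum.cong) auto
  also have "\<dots> = (\<Sum>i<M. \<Sum>j\<in>{j\<in>{..<M}. i \<le> j}. a i * f (j - i))"
    by (rule sum.swap_restrict) auto
  also have "\<dots> = (\<Sum>i<M. \<Sum>j\<in>{i..<M}. a i * f (j - i))"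
    by (intro sum.cong) auto
  also have "\<dots> = (\<Sum>i<M. a i * (\<Sum>j<M - i. f j))"
    by (simp add: sum.atLeastLessThan_shift_0[of _ _ M] sum_distrib_left atLeast0LessThan)
  also have "\<dots> = (\<Sum>i<M + K. a i * (\<Sum>j<M - i. f j))"
    by (rule sum.mono_neutral_left) auto
  also have "\<dots> = (\<Sum>i<K. a i * (\<Sum>j<M - i. f j))"
    by (rule sum.mono_neutral_right) (auto simp: assms)
  finally show ?thesis .
qed

lemma delta_suminf_convolution:
  fixes f a :: "nat \<Rightarrow> mpoly fps"
  assumes vanishing: "\<And>j i. i < j \<Longrightarrow> f j $ i = 0"
    and support: "\<And>i. K \<le> i \<Longrightarrow> a i = 0"
    and delta_f: "\<And>j. delta k (f j) = (\<Sum>i\<le>j. a i * f (j - i))"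
  shows "delta k (suminf f) = (\<Sum>i<K. a i) * suminf f"
proof -
  define P where "P M = (\<Sum>j<M. f j)" for M
  have "f sums suminf f"
    using sums_fps_of_nth_vanishing[OF vanishing] by (simp add: sums_iff)
  then have P: "P \<longlonglongrightarrow> suminf f"
    unfolding P_def sums_def .
  have delta_P: "delta k (P M) = (\<Sum>i<K. a i * P (M - i))" for M
    unfolding P_def delta_sum delta_f by (rule sum_convolution_finite_support[OF support])
  have "(\<lambda>M. P (M - i)) \<longlonglongrightarrow> suminf f" for i
    by (rule filterlim_compose[OF P filterlim_minus_const_nat_at_top])
  then have "(\<lambda>M. \<Sum>i<K. a i * P (M - i)) \<longlonglongrightarrow> (\<Sum>i<K. a i * suminf f)"
    by (intro tendsto_fps_sum tendsto_fps_mult_left)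
  then have "(\<lambda>M. delta k (P M)) \<longlonglongrightarrow> (\<Sum>i<K. a i * suminf f)"
    by (simp only: delta_P)
  with tendsto_delta[OF P] have "delta k (suminf f) = (\<Sum>i<K. a i * suminf f)"
    by (rule LIMSEQ_unique)
  then show ?thesis
    by (simp add: sum_distrib_right)
qed

lemma fps_const_neg_one_power: "fps_const ((-1) ^ i :: mpoly) = fps_of_rat ((-1) ^ i)"
  by (simp add: mconst_neg_one_power)

lemma of_nat_mult_cancel_mpoly_fps:
  fixes F G :: "mpoly fps"
  assumes "0 < m" "of_nat m * F = of_nat m * G"
  shows "F = G"
proof -
  have inverse: "fps_of_rat (1 / of_nat m) * of_nat m = 1"
    using assms(1) by (simp flip: fps_of_nat mconst_of_nat mconst_mult add: mconst_1)
  have "fps_of_rat (1 / of_nat m) * (of_nat m * F) = fps_of_rat (1 / of_nat m) * (of_nat m * G)"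
    using assms(2) by simp
  then show ?thesis
    by (simp only: mult.assoc[symmetric] inverse mult_1_left)
qed

(* The coefficient -binom(k, j)/k of T^(k-j) H(1^(m-j)) in delta_k H(1^m), extended by zero
   outside 0 < j < k so that the sums below may range over {1..m} or {..<k}. *)
definition delta_Ha_ones_coeff :: "nat \<Rightarrow> nat \<Rightarrow> rat" where
  "delta_Ha_ones_coeff k j = (if 0 < j \<and> j < k then - of_nat (k choose j) / of_nat k else 0)"

lemma of_nat_mult_delta_Ha_ones_coeff:
  assumes "0 < j"
  shows "of_nat j * delta_Ha_ones_coeff k j = (if j < k then - of_nat ((k - 1) choose (j - 1)) else 0)"
proof -
  have "of_nat j * of_nat (k choose j) = (of_nat k * of_nat ((k - 1) choose (j - 1)) :: rat)"
    using times_binomial_minus1_eq[OF assms, of k] by (metis of_nat_mult)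
  then show ?thesis
    using assms by (auto simp: delta_Ha_ones_coeff_def field_simps)
qed

lemma delta_Ha:
  assumes "odd k" "3 \<le> k" "1 \<le> i"
  shows "delta k (Ha i) =
    (if i < k then fps_of_rat ((-1) ^ i * of_nat ((k - 1) choose (i - 1))) * fps_X ^ (k - i) else 0)"
proof (rule fps_ext)
  fix j
  have "delta k (Ha i) $ j =
      mconst ((-1) ^ i) * (if j = 0 then 0 else mconst (of_nat ((i + j - 1) choose (i - 1))) *
        (if i + j = k then 1 else 0))"
    by (simp add: Ha_def pderiv_var_mconst_mult pderiv_var_zeta_a[OF assms(1,2)]
        flip: mconst_neg_one_power mconst_of_nat)
  then show "delta k (Ha i) $ j = (if i < k then fps_of_rat ((-1) ^ i * of_nat ((k - 1) choose (i - 1)))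
      * fps_X ^ (k - i) else 0) $ j"
    using assms(3) by (auto simp: mconst_mult mconst_0)
qed

lemma signed_delta_Ha:
  assumes "odd k" "3 \<le> k" "1 \<le> i"
  shows "fps_const ((-1) ^ (i - 1)) * delta k (Ha i) =
    fps_of_rat (of_nat i * delta_Ha_ones_coeff k i) * fps_X ^ (k - i)"
proof -
  have "(-1) ^ (i - 1) * ((-1) ^ i * c) = - (c :: rat)" for c
    using assms(3) by (cases i) auto
  then show ?thesis
    using assms by (simp add: delta_Ha of_nat_mult_delta_Ha_ones_coeff fps_const_neg_one_power
        mult.assoc fps_of_rat_0 flip: mconst_mult)
qed

declare Ha_ones.simps [simp del]

lemma Ha_ones_0 [simp]: "Ha_ones 0 = 1"
  by (simp add: Ha_ones.simps)

lemma Ha_ones_newton: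
  "of_nat m * Ha_ones m = (\<Sum>i\<in>{1..m}. fps_const ((-1) ^ (i - 1)) * Ha i * Ha_ones (m - i))"
proof (cases "m = 0")
  case False
  have "of_nat m * fps_of_rat (1 / of_nat m) = 1"
    using False by (simp flip: fps_of_nat mconst_of_nat mconst_mult add: mconst_1)
  then show ?thesis
    by (subst Ha_ones.simps) (simp add: False mult.assoc[symmetric])
qed simp

lemma sum_triangle_swap:
  fixes g :: "nat \<Rightarrow> nat \<Rightarrow> 'a::comm_monoid_add"
  shows "(\<Sum>i\<in>{1..m}. \<Sum>j\<in>{1..m - i}. g i j) = (\<Sum>j\<in>{1..m}. \<Sum>i\<in>{1..m - j}. g i j)"
proof -
  have "(\<Sum>i\<in>{1..m}. \<Sum>j\<in>{1..m - i}. g i j) = (\<Sum>i\<in>{1..m}. \<Sum>j\<in>{j\<in>{1..m}. i + j \<le> m}. g i j)"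
    by (intro sum.cong) auto
  also have "\<dots> = (\<Sum>j\<in>{1..m}. \<Sum>i\<in>{i\<in>{1..m}. i + j \<le> m}. g i j)"
    by (rule sum.swap_restrict) auto
  also have "\<dots> = (\<Sum>j\<in>{1..m}. \<Sum>i\<in>{1..m - j}. g i j)"
    by (intro sum.cong) auto
  finally show ?thesis .
qed

lemma sum_Ha_mult_convolution:
  "(\<Sum>i\<in>{1..m}. fps_const ((-1) ^ (i - 1)) * Ha i * (\<Sum>j\<in>{1..m - i}. c j * Ha_ones (m - i - j))) =
    (\<Sum>j\<in>{1..m}. c j * (of_nat (m - j) * Ha_ones (m - j)))"
proof -
  have "(\<Sum>i\<in>{1..m}. fps_const ((-1) ^ (i - 1)) * Ha i * (\<Sum>j\<in>{1..m - i}. c j * Ha_ones (m - i - j))) =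
      (\<Sum>i\<in>{1..m}. \<Sum>j\<in>{1..m - i}. c j * (fps_const ((-1) ^ (i - 1)) * Ha i * Ha_ones (m - j - i)))"
    by (simp add: sum_distrib_left mult_ac diff_commute add.commute)
  also have "\<dots> = (\<Sum>j\<in>{1..m}. c j * (\<Sum>i\<in>{1..m - j}. fps_const ((-1) ^ (i - 1)) * Ha i * Ha_ones (m - j - i)))"
    by (subst sum_triangle_swap) (simp only: sum_distrib_left)
  also have "\<dots> = (\<Sum>j\<in>{1..m}. c j * (of_nat (m - j) * Ha_ones (m - j)))"
    by (simp only: Ha_ones_newton)
  finally show ?thesis .
qed

lemma delta_Ha_ones:
  assumes "odd k" "3 \<le> k"
  shows "delta k (Ha_ones m) =
    (\<Sum>j\<in>{1..m}. fps_of_rat (delta_Ha_ones_coeff k j) * fps_X ^ (k - j) * Ha_ones (m - j))"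
proof (induction m rule: less_induct)
  case (less m)
  let ?s = "\<lambda>i. fps_const ((-1) ^ (i - 1)) :: mpoly fps"
  let ?c = "\<lambda>j. fps_of_rat (delta_Ha_ones_coeff k j) * fps_X ^ (k - j)"
  have "of_nat m * delta k (Ha_ones m) = delta k (of_nat m * Ha_ones m)"
    by (simp add: delta_mult)
  also have "\<dots> = (\<Sum>i\<in>{1..m}. ?s i * delta k (Ha i) * Ha_ones (m - i))
      + (\<Sum>i\<in>{1..m}. ?s i * Ha i * delta k (Ha_ones (m - i)))"
    unfolding Ha_ones_newton
    by (simp add: fps_const_neg_one_power delta_sum delta_mult sum.distrib algebra_simps)
  also have "\<dots> = (\<Sum>j\<in>{1..m}. fps_of_rat (of_nat j * delta_Ha_ones_coeff k j) * fps_X ^ (k - j) * Ha_ones (m - j))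
      + (\<Sum>j\<in>{1..m}. ?c j * (of_nat (m - j) * Ha_ones (m - j)))"
  proof -
    have "(\<Sum>i\<in>{1..m}. ?s i * delta k (Ha i) * Ha_ones (m - i)) =
        (\<Sum>j\<in>{1..m}. fps_of_rat (of_nat j * delta_Ha_ones_coeff k j) * fps_X ^ (k - j) * Ha_ones (m - j))"
      by (intro sum.cong) (simp_all add: signed_delta_Ha[OF assms, symmetric])
    moreover have "(\<Sum>i\<in>{1..m}. ?s i * Ha i * delta k (Ha_ones (m - i))) =
        (\<Sum>i\<in>{1..m}. ?s i * Ha i * (\<Sum>j\<in>{1..m - i}. ?c j * Ha_ones (m - i - j)))"
      using less.IH by (intro sum.cong) simp_all
    ultimately show ?thesis
      by (simp only: sum_Ha_mult_convolution)
  qed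
  also have "\<dots> = of_nat m * (\<Sum>j\<in>{1..m}. ?c j * Ha_ones (m - j))"
    unfolding sum_distrib_left sum.distrib[symmetric]
  proof (rule sum.cong)
    fix j assume "j \<in> {1..m}"
    then have m: "(of_nat m :: mpoly fps) = of_nat j + of_nat (m - j)"
      by (simp flip: of_nat_add)
    show "fps_of_rat (of_nat j * delta_Ha_ones_coeff k j) * fps_X ^ (k - j) * Ha_ones (m - j)
        + ?c j * (of_nat (m - j) * Ha_ones (m - j)) = of_nat m * (?c j * Ha_ones (m - j))"
      by (simp only: m fps_of_rat_mult fps_of_rat_of_nat) (simp add: algebra_simps)
  qed simp
  finally show ?case
    by (cases "m = 0") (auto intro: of_nat_mult_cancel_mpoly_fps)
qed

lemma delta_Ha_ones_series_term:
  assumes "odd k" "3 \<le> k"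
  shows "delta k (of_nat (x ^ j) * fps_X ^ j * Ha_ones j) =
    (\<Sum>i\<le>j. (fps_of_rat (delta_Ha_ones_coeff k i * of_nat (x ^ i)) * fps_X ^ k) *
      (of_nat (x ^ (j - i)) * fps_X ^ (j - i) * Ha_ones (j - i)))"
proof -
  have "delta k (of_nat (x ^ j) * fps_X ^ j * Ha_ones j) =
      (\<Sum>i\<in>{1..j}. of_nat (x ^ j) * fps_X ^ j *
        (fps_of_rat (delta_Ha_ones_coeff k i) * fps_X ^ (k - i) * Ha_ones (j - i)))"
    by (simp add: delta_mult delta_Ha_ones[OF assms] sum_distrib_left del: of_nat_power)
  also have "\<dots> = (\<Sum>i\<in>{1..j}. (fps_of_rat (delta_Ha_ones_coeff k i * of_nat (x ^ i)) * fps_X ^ k) *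
      (of_nat (x ^ (j - i)) * fps_X ^ (j - i) * Ha_ones (j - i)))"
  proof (rule sum.cong)
    fix i assume i: "i \<in> {1..j}"
    show "of_nat (x ^ j) * fps_X ^ j * (fps_of_rat (delta_Ha_ones_coeff k i) * fps_X ^ (k - i) * Ha_ones (j - i)) =
        (fps_of_rat (delta_Ha_ones_coeff k i * of_nat (x ^ i)) * fps_X ^ k) *
          (of_nat (x ^ (j - i)) * fps_X ^ (j - i) * Ha_ones (j - i))"
    proof (cases "i < k")
      case True
      have "(of_nat (x ^ j) :: mpoly fps) = of_nat (x ^ i) * of_nat (x ^ (j - i))"
        using i by (simp flip: of_nat_mult power_add)
      moreover have "(fps_X :: mpoly fps) ^ j * fps_X ^ (k - i) = fps_X ^ k * fps_X ^ (j - i)"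
        using i True by (simp flip: power_add)
      ultimately show ?thesis
        by (simp add: fps_of_rat_mult fps_of_rat_of_nat mult_ac del: fps_const_mult of_nat_power)
    qed (simp add: delta_Ha_ones_coeff_def fps_of_rat_0)
  qed simp
  also have "\<dots> = (\<Sum>i\<le>j. (fps_of_rat (delta_Ha_ones_coeff k i * of_nat (x ^ i)) * fps_X ^ k) *
      (of_nat (x ^ (j - i)) * fps_X ^ (j - i) * Ha_ones (j - i)))"
    by (rule sum.mono_neutral_left) (auto simp: delta_Ha_ones_coeff_def mconst_0)
  finally show ?thesis .
qed

lemma delta_c_a:
  assumes "odd k" "3 \<le> k"
  shows "delta k (c_a n) =
    fps_of_rat (\<Sum>i<k. delta_Ha_ones_coeff k i * of_nat ((n - 1) ^ i)) * fps_X ^ k * c_a n"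
proof -
  define f where "f j = of_nat ((n - 1) ^ j) * fps_X ^ j * Ha_ones j" for j
  define a where "a i = fps_of_rat (delta_Ha_ones_coeff k i * of_nat ((n - 1) ^ i)) * fps_X ^ k" for i
  have c_a: "c_a n = of_nat n * suminf f"
    unfolding c_a_def f_def[abs_def] ..
  have "delta k (suminf f) = (\<Sum>i<k. a i) * suminf f"
  proof (rule delta_suminf_convolution)
    show "f j $ i = 0" if "i < j" for i j
      using that by (simp add: f_def mult.assoc fps_X_power_mult_nth flip: fps_of_nat)
    show "a i = 0" if "k \<le> i" for i
      using that by (simp add: a_def delta_Ha_ones_coeff_def fps_of_rat_0)
    show "delta k (f j) = (\<Sum>i\<le>j. a i * f (j - i))" for j
      unfolding a_def f_def by (rule delta_Ha_ones_series_term[OF assms])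
  qed
  moreover have "(\<Sum>i<k. a i) =
      fps_of_rat (\<Sum>i<k. delta_Ha_ones_coeff k i * of_nat ((n - 1) ^ i)) * fps_X ^ k"
    by (simp only: a_def fps_of_rat_sum sum_distrib_right)
  ultimately show ?thesis
    by (simp add: c_a delta_mult mult_ac)
qed

lemma sum_delta_Ha_ones_coeff:
  assumes "0 < k"
  shows "(\<Sum>i<k. delta_Ha_ones_coeff k i * of_nat (x ^ i)) =
    - (1 / of_nat k * (of_nat ((x + 1) ^ k) - of_nat (x ^ k) - 1))"
proof -
  have "{..k} = insert 0 (insert k {1..<k})"
    using assms by auto
  then have "(x + 1) ^ k = (\<Sum>i\<in>insert 0 (insert k {1..<k}). of_nat (k choose i) * x ^ i * 1 ^ (k - i))"
    by (simp only: binomial_ring)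
  then have "(x + 1) ^ k = 1 + x ^ k + (\<Sum>i\<in>{1..<k}. (k choose i) * x ^ i)"
    using assms by simp
  then have "of_nat ((x + 1) ^ k) - of_nat (x ^ k) - 1 = (\<Sum>i\<in>{1..<k}. of_nat (k choose i) * (of_nat (x ^ i) :: rat))"
    by (simp add: of_nat_sum)
  moreover have "(\<Sum>i<k. delta_Ha_ones_coeff k i * of_nat (x ^ i)) =
      (\<Sum>i\<in>{1..<k}. - (of_nat (k choose i) * of_nat (x ^ i)) / (of_nat k :: rat))"
    by (rule sum.mono_neutral_cong_right) (auto simp: delta_Ha_ones_coeff_def)
  ultimately show ?thesis
    by (simp add: sum_divide_distrib sum_negf)
qed

theorem mainTheorem9:
  fixes n k :: nat
  assumes "0 < n" and "odd k" and "3 \<le> k"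
  shows "delta k (c_a n) =
    - (fps_const (mconst (1 / of_nat k)) * fps_X ^ k *
        (of_nat (n ^ k) - of_nat ((n - 1) ^ k) - 1)) * c_a n"
proof -
  let ?d = "of_nat (n ^ k) - of_nat ((n - 1) ^ k) - 1 :: rat"
  have "(\<Sum>i<k. delta_Ha_ones_coeff k i * of_nat ((n - 1) ^ i)) = - (1 / of_nat k * ?d)"
    using sum_delta_Ha_ones_coeff[of k "n - 1"] assms by simp
  then have "delta k (c_a n) = fps_of_rat (- (1 / of_nat k * ?d)) * fps_X ^ k * c_a n"
    using delta_c_a[OF assms(2,3), of n] by simp
  also have "fps_of_rat (- (1 / of_nat k * ?d)) = - (fps_of_rat (1 / of_nat k) * fps_of_rat ?d)"
    by (simp only: mconst_uminus mconst_mult fps_const_neg[symmetric] fps_const_mult[symmetric])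
  also have "fps_of_rat ?d = of_nat (n ^ k) - of_nat ((n - 1) ^ k) - 1"
    by (simp only: fps_of_rat_diff fps_of_rat_of_nat fps_of_rat_1)
  finally show ?thesis
    by (simp add: algebra_simps del: fps_const_mult)
qed

end
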